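(* Let $p\in(0,1)$, $x\geq1$, and let $(\xi_n)_{n\geq1}$ be i.i.d. with $\mathbf{P}(\xi_1=1)=p=1-\mathbf{P}(\xi_1=-1)$. Set $W_0:=x$, $B_1:=1$, $W_n:=W_{n-1}+\xi_nB_n$, $B_{n+1}:=B_n2^{\xi_n}$ for $n\geq1$, and $Y_n:=W_n/B_{n+1}$ for $n\in\mathbb{N}$. Then almost surely on the event $\{Y_k\leq2\text{ for some }k\in\mathbb{N}\}$, there exists $n$ with $W_n\leq0$ (the gambler eventually goes bankrupt). *)

theory Defs
  imports "HOL-Probability.Probability"
begin

text \<open>Betting strategy along a fixed sample path xi (xi n for n >= 1).
  bet xi n = B_n for n >= 1; B_1 = 1, B_(n+1) = B_n * 2 powr (xi n).
  The value at index 0 is an unused convention.\<close>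
primrec bet :: "(nat \<Rightarrow> real) \<Rightarrow> nat \<Rightarrow> real" where
  "bet xi 0 = 1"
| "bet xi (Suc n) = (if n = 0 then 1 else bet xi n * 2 powr (xi n))"

primrec wealth :: "real \<Rightarrow> (nat \<Rightarrow> real) \<Rightarrow> nat \<Rightarrow> real" where
  "wealth x xi 0 = x"
| "wealth x xi (Suc n) = wealth x xi n + xi (Suc n) * bet xi (Suc n)"

definition ratioY :: "real \<Rightarrow> (nat \<Rightarrow> real) \<Rightarrow> nat \<Rightarrow> real" where
  "ratioY x xi n = wealth x xi n / bet xi (Suc n)"

end

theory Submission
  imports Defs
begin

text \<open>With \<open>Y\<^sub>n = W\<^sub>n / B\<^sub>n\<^sub>+\<^sub>1\<close>, a win maps \<open>Y\<close> to \<open>(Y + 1) / 2\<close> and a loss maps it to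
  \<open>2 (Y - 1)\<close>. Hence \<open>Y \<le> 2\<close> is preserved forever, and from \<open>Y \<le> 2\<close> the three outcomes
  win, loss, loss lead to \<open>Y \<le> 3/2\<close>, \<open>Y \<le> 1\<close>, \<open>Y \<le> 0\<close>; since \<open>B > 0\<close> this means \<open>W \<le> 0\<close>.
  The pattern win, loss, loss occurs in each of the disjoint blocks \<open>{3j+1, 3j+2, 3j+3}\<close>
  independently with probability \<open>p (1 - p)\<^sup>2 > 0\<close>, so by Borel's zero-one law it almost
  surely occurs in infinitely many blocks, in particular after any time \<open>k\<close>.\<close>

lemma bet_pos: "bet xi n > 0"
  by (induction n) auto

lemma ratioY_Suc:
  "ratioY x xi (Suc n) = (ratioY x xi n + xi (Suc n)) / 2 powr xi (Suc n)"
  using bet_pos[of xi "Suc n"] by (simp add: ratioY_def field_simps)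

lemma ratioY_le_2_persists:
  assumes pm: "\<And>n. n \<ge> 1 \<Longrightarrow> xi n = 1 \<or> xi n = -1"
    and le: "ratioY x xi k \<le> 2" and "k \<le> n"
  shows "ratioY x xi n \<le> 2"
  using \<open>k \<le> n\<close>
proof (induction n rule: dec_induct)
  case base
  show ?case using le .
next
  case (step m)
  from pm[of "Suc m"] step.IH show ?case
    by (auto simp: ratioY_Suc powr_minus_divide)
qed

definition down_pattern :: "(nat \<Rightarrow> real) \<Rightarrow> nat \<Rightarrow> bool" where
  "down_pattern xi m \<longleftrightarrow> xi m = 1 \<and> xi (Suc m) = -1 \<and> xi (Suc (Suc m)) = -1"

lemma wealth_nonpos_after_down_pattern:
  assumes pm: "\<And>n. n \<ge> 1 \<Longrightarrow> xi n = 1 \<or> xi n = -1"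
    and le: "ratioY x xi k \<le> 2" and "k < m" and pat: "down_pattern xi m"
  shows "wealth x xi (Suc (Suc m)) \<le> 0"
proof -
  obtain m' where m: "m = Suc m'" using \<open>k < m\<close> by (cases m) auto
  have "ratioY x xi m' \<le> 2"
    using ratioY_le_2_persists[OF pm le] \<open>k < m\<close> m by simp
  then have "ratioY x xi m \<le> 3/2"
    using pat m by (simp add: down_pattern_def ratioY_Suc)
  then have "ratioY x xi (Suc m) \<le> 1"
    using pat by (simp add: down_pattern_def ratioY_Suc powr_minus_divide)
  then have "ratioY x xi (Suc (Suc m)) \<le> 0"
    using pat by (simp add: down_pattern_def ratioY_Suc powr_minus_divide)
  then show ?thesis
    using bet_pos[of xi "Suc (Suc (Suc m))"] by (simp add: ratioY_def divide_le_0_iff)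
qed

lemma (in prob_space) AE_frequently_indep_events:
  fixes P :: "nat \<Rightarrow> 'a \<Rightarrow> bool"
  assumes indep: "indep_events (\<lambda>m. {x \<in> space M. P m x}) UNIV"
    and "q > 0" and q: "\<And>m. prob {x \<in> space M. P m x} \<ge> q"
  shows "AE x in M. \<forall>n. \<exists>m\<ge>n. P m x"
proof -
  define L where "L n = (\<Union>m\<in>{n..}. {x \<in> space M. P m x})" for n
  have P_events: "{x \<in> space M. P m x} \<in> events" for m
    using indep by (auto simp: indep_events_def)
  then have L_events: "range L \<subseteq> events"
    unfolding L_def by (intro image_subsetI sets.countable_UN'' P_events) auto
  have "decseq L"
    unfolding L_def decseq_def by (intro allI impI UN_mono) auto
  have "q \<le> prob (L n)" for n
  proof -
    have "prob {x \<in> space M. P n x} \<le> prob (L n)"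
      using L_events by (intro finite_measure_mono) (auto simp: L_def)
    then show ?thesis
      using q[of n] by linarith
  qed
  then have "q \<le> prob (\<Inter>n. L n)"
    using finite_Lim_measure_decseq[OF L_events \<open>decseq L\<close>] by (intro LIMSEQ_le_const) auto
  moreover have "prob (\<Inter>n. L n) = 0 \<or> prob (\<Inter>n. L n) = 1"
    unfolding L_def by (rule borel_0_1_law[OF indep])
  ultimately have "prob (\<Inter>n. L n) = 1"
    using \<open>q > 0\<close> by auto
  from AE_prob_1[OF this] show ?thesis
    by eventually_elim (auto simp: L_def)
qed

lemma (in prob_space) AE_two_valued:
  fixes X :: "'a \<Rightarrow> real"
  assumes [measurable]: "X \<in> borel_measurable M" and "a \<noteq> b"
    and "prob {x \<in> space M. X x = a} + prob {x \<in> space M. X x = b} = 1"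
  shows "AE x in M. X x = a \<or> X x = b"
proof -
  have "prob ({x \<in> space M. X x = a} \<union> {x \<in> space M. X x = b}) = 1"
    using assms by (subst finite_measure_Union) auto
  from AE_prob_1[OF this] show ?thesis
    by eventually_elim auto
qed

lemma (in prob_space) prob_down_pattern:
  fixes \<xi> :: "nat \<Rightarrow> 'a \<Rightarrow> real"
  assumes indep: "indep_vars (\<lambda>_. borel) \<xi> {1..}" and "m \<ge> 1"
  shows "prob {\<omega> \<in> space M. down_pattern (\<lambda>n. \<xi> n \<omega>) m} =
    prob {\<omega> \<in> space M. \<xi> m \<omega> = 1} * prob {\<omega> \<in> space M. \<xi> (Suc m) \<omega> = -1} *
    prob {\<omega> \<in> space M. \<xi> (Suc (Suc m)) \<omega> = -1}"
proof -
  define c where "c i = (if i = m then {1::real} else {-1})" for i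
  have preimage: "\<xi> i -` {a} \<inter> space M = {\<omega> \<in> space M. \<xi> i \<omega> = a}" for i a
    by auto
  have "{\<omega> \<in> space M. down_pattern (\<lambda>n. \<xi> n \<omega>) m} =
      (\<Inter>i\<in>{m, Suc m, Suc (Suc m)}. \<xi> i -` c i \<inter> space M)"
    by (auto simp: c_def down_pattern_def)
  also have "prob \<dots> = (\<Prod>i\<in>{m, Suc m, Suc (Suc m)}. prob (\<xi> i -` c i \<inter> space M))"
    using \<open>m \<ge> 1\<close> by (intro indep_varsD[OF indep]) (auto simp: c_def)
  finally show ?thesis
    by (simp add: c_def preimage)
qed

lemma (in prob_space) indep_events_down_pattern_blocks:
  fixes \<xi> :: "nat \<Rightarrow> 'a \<Rightarrow> real"
  assumes indep: "indep_vars (\<lambda>_. borel) \<xi> {1..}"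
  shows "indep_events (\<lambda>j. {\<omega> \<in> space M. down_pattern (\<lambda>n. \<xi> n \<omega>) (3 * j + 1)}) UNIV"
proof -
  define K where "K j = {3 * j + 1, 3 * j + 2, 3 * j + 3}" for j :: nat
  have "disjoint_family K"
    by (auto simp: disjoint_family_on_def K_def)
  then have blocks: "indep_vars (\<lambda>j. PiM (K j) (\<lambda>_. borel)) (\<lambda>j \<omega>. restrict (\<lambda>i. \<xi> i \<omega>) (K j)) UNIV"
    by (rule indep_vars_restrict[OF indep, rotated]) (auto simp: K_def)
  have "{f \<in> space (PiM (K j) (\<lambda>_. borel)). down_pattern f (3 * j + 1)} \<in> sets (PiM (K j) (\<lambda>_. borel))"
    for j
  proof -
    have [measurable]: "(\<lambda>f. f i) \<in> borel_measurable (PiM (K j) (\<lambda>_. borel))" if "i \<in> K j" for i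
      using that by (rule measurable_component_singleton)
    show ?thesis
      by (simp add: down_pattern_def K_def)
  qed
  from indep_eventsI_indep_vars[OF blocks this] show ?thesis
    by (simp add: K_def down_pattern_def)
qed

theorem lemma2p1:
  fixes M :: "'a measure" and \<xi> :: "nat \<Rightarrow> 'a \<Rightarrow> real" and p x :: real
  assumes "prob_space M"
    and "0 < p" and "p < 1" and "x \<ge> 1"
    and "\<And>n. \<xi> n \<in> borel_measurable M"
    and "prob_space.indep_vars M (\<lambda>_. borel) \<xi> {1..}"
    and "\<And>n. n \<ge> 1 \<Longrightarrow> measure M {\<omega> \<in> space M. \<xi> n \<omega> = 1} = p"
    and "\<And>n. n \<ge> 1 \<Longrightarrow> measure M {\<omega> \<in> space M. \<xi> n \<omega> = -1} = 1 - p"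
  shows "AE \<omega> in M. (\<exists>k. ratioY x (\<lambda>n. \<xi> n \<omega>) k \<le> 2) \<longrightarrow>
                     (\<exists>n. wealth x (\<lambda>n. \<xi> n \<omega>) n \<le> 0)"
proof -
  interpret prob_space M by fact
  have "AE \<omega> in M. \<forall>n. n \<ge> 1 \<longrightarrow> \<xi> n \<omega> = 1 \<or> \<xi> n \<omega> = -1"
    unfolding AE_all_countable using assms(5,7,8) by (auto intro: AE_two_valued)
  moreover have "AE \<omega> in M. \<forall>i. \<exists>j\<ge>i. down_pattern (\<lambda>n. \<xi> n \<omega>) (3 * j + 1)"
    using indep_events_down_pattern_blocks[OF assms(6)]
  proof (rule AE_frequently_indep_events)
    show "0 < p * (1 - p)\<^sup>2"
      using assms(2,3) by simp
    show "p * (1 - p)\<^sup>2 \<le> prob {\<omega> \<in> space M. down_pattern (\<lambda>n. \<xi> n \<omega>) (3 * j + 1)}" for j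
      using prob_down_pattern[OF assms(6)] assms(7,8) by (simp add: power2_eq_square)
  qed
  ultimately show ?thesis
  proof eventually_elim
    case (elim \<omega>)
    show ?case
    proof
      assume "\<exists>k. ratioY x (\<lambda>n. \<xi> n \<omega>) k \<le> 2"
      then obtain k where k: "ratioY x (\<lambda>n. \<xi> n \<omega>) k \<le> 2" ..
      obtain j where "j \<ge> k" "down_pattern (\<lambda>n. \<xi> n \<omega>) (3 * j + 1)"
        using elim(2) by blast
      with elim(1) k have "wealth x (\<lambda>n. \<xi> n \<omega>) (Suc (Suc (3 * j + 1))) \<le> 0"
        by (intro wealth_nonpos_after_down_pattern[where k = k]) auto
      then show "\<exists>n. wealth x (\<lambda>n. \<xi> n \<omega>) n \<le> 0" ..
    qed
  qed
qed

end
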